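(* A semiring $S$ is a nil-extension of a rectangular skew-ring if and only if $S$ is a completely Archimedean semiring and $E^+(S)$ is a subsemigroup of $(S,+)$.
   Context: A semiring $(S,+,\cdot)$ has two associative operations with $a(b+c)=ab+ac$, $(b+c)a=ba+ca$. $na$ denotes the $n$-fold sum of $a$. $E^+(S)$ is the set of additive idempotents. $a$ is additively regular if $a=a+x+a$ for some $x$; $a$ is completely regular if there is $x$ with $a=a+x+a$, $a+x=x+a$, $a(a+x)=a+x$; $S$ is quasi completely regular if for each $a$ some $na$ is completely regular. $\mathscr{J}^+$ is Green's $\mathscr{J}$-relation on $(S,+)$. For $a\in S$ let $m(a)$ be the least positive integer with $m(a)a$ additively regular; $a\,\mathscr{J}^{*^{+}}\,b$ iff $m(a)a\,\mathscr{J}^+\,m(b)b$. A completely Archimedean semiring is a quasi completely regular semiring with $\mathscr{J}^{*^{+}}=S\times S$. A completely simple semiring is a semiring all of whose elements are completely regular and with $\mathscr{J}^+=S\times S$. A rectangular skew-ring is a completely simple semiring $K$ with $E^+(K)$ a subsemigroup of $(K,+)$. $S$ is a nil-extension of a subsemiring $K$ if $K$ is a bi-ideal of $S$ (for $a\in K$, $x\in S$: $a+x,x+a,ax,xa\in K$) and for every $a\in S$ some $na\in K$. *)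

theory Defs
  imports Main
begin

text \<open>Semirings are given by a carrier set S with two binary operations
  (addition not assumed commutative, no zero/one assumed).\<close>

definition semiring :: "'a set \<Rightarrow> ('a \<Rightarrow> 'a \<Rightarrow> 'a) \<Rightarrow> ('a \<Rightarrow> 'a \<Rightarrow> 'a) \<Rightarrow> bool" where
  "semiring S add mul \<longleftrightarrow>
     (\<forall>a\<in>S. \<forall>b\<in>S. add a b \<in> S \<and> mul a b \<in> S) \<and>
     (\<forall>a\<in>S. \<forall>b\<in>S. \<forall>c\<in>S. add (add a b) c = add a (add b c)) \<and>
     (\<forall>a\<in>S. \<forall>b\<in>S. \<forall>c\<in>S. mul (mul a b) c = mul a (mul b c)) \<and>
     (\<forall>a\<in>S. \<forall>b\<in>S. \<forall>c\<in>S. mul a (add b c) = add (mul a b) (mul a c)) \<and>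
     (\<forall>a\<in>S. \<forall>b\<in>S. \<forall>c\<in>S. mul (add b c) a = add (mul b a) (mul c a))"

text \<open>n-fold sum n a (meaningful for n \<ge> 1; for n = 0 it is just a).\<close>
fun nsum :: "('a \<Rightarrow> 'a \<Rightarrow> 'a) \<Rightarrow> nat \<Rightarrow> 'a \<Rightarrow> 'a" where
  "nsum add 0 a = a"
| "nsum add (Suc 0) a = a"
| "nsum add (Suc (Suc n)) a = add (nsum add (Suc n) a) a"

definition add_idempotents :: "'a set \<Rightarrow> ('a \<Rightarrow> 'a \<Rightarrow> 'a) \<Rightarrow> 'a set" where
  "add_idempotents S add = {e \<in> S. add e e = e}"

definition add_subsemigroup :: "'a set \<Rightarrow> 'a set \<Rightarrow> ('a \<Rightarrow> 'a \<Rightarrow> 'a) \<Rightarrow> bool" where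
  "add_subsemigroup T S add \<longleftrightarrow> T \<subseteq> S \<and> (\<forall>a\<in>T. \<forall>b\<in>T. add a b \<in> T)"

definition add_regular :: "'a set \<Rightarrow> ('a \<Rightarrow> 'a \<Rightarrow> 'a) \<Rightarrow> 'a \<Rightarrow> bool" where
  "add_regular S add a \<longleftrightarrow> (\<exists>x\<in>S. a = add (add a x) a)"

definition completely_regular ::
  "'a set \<Rightarrow> ('a \<Rightarrow> 'a \<Rightarrow> 'a) \<Rightarrow> ('a \<Rightarrow> 'a \<Rightarrow> 'a) \<Rightarrow> 'a \<Rightarrow> bool" where
  "completely_regular S add mul a \<longleftrightarrow>
     (\<exists>x\<in>S. a = add (add a x) a \<and> add a x = add x a \<and> mul a (add a x) = add a x)"

definition quasi_completely_regular ::
  "'a set \<Rightarrow> ('a \<Rightarrow> 'a \<Rightarrow> 'a) \<Rightarrow> ('a \<Rightarrow> 'a \<Rightarrow> 'a) \<Rightarrow> bool" where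
  "quasi_completely_regular S add mul \<longleftrightarrow> semiring S add mul \<and>
     (\<forall>a\<in>S. \<exists>n\<ge>1. completely_regular S add mul (nsum add n a))"

text \<open>Principal two-sided ideal of a in the semigroup (S,+), i.e. S^1 + a + S^1.\<close>
definition add_principal_ideal :: "'a set \<Rightarrow> ('a \<Rightarrow> 'a \<Rightarrow> 'a) \<Rightarrow> 'a \<Rightarrow> 'a set" where
  "add_principal_ideal S add a =
     {a} \<union> {add s a | s. s \<in> S} \<union> {add a t | t. t \<in> S} \<union> {add (add s a) t | s t. s \<in> S \<and> t \<in> S}"

definition addJ :: "'a set \<Rightarrow> ('a \<Rightarrow> 'a \<Rightarrow> 'a) \<Rightarrow> 'a \<Rightarrow> 'a \<Rightarrow> bool" where
  "addJ S add a b \<longleftrightarrow> a \<in> S \<and> b \<in> S \<and> add_principal_ideal S add a = add_principal_ideal S add b"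

definition mreg :: "'a set \<Rightarrow> ('a \<Rightarrow> 'a \<Rightarrow> 'a) \<Rightarrow> 'a \<Rightarrow> nat" where
  "mreg S add a = (LEAST n. n \<ge> 1 \<and> add_regular S add (nsum add n a))"

definition addJstar :: "'a set \<Rightarrow> ('a \<Rightarrow> 'a \<Rightarrow> 'a) \<Rightarrow> 'a \<Rightarrow> 'a \<Rightarrow> bool" where
  "addJstar S add a b \<longleftrightarrow>
     addJ S add (nsum add (mreg S add a) a) (nsum add (mreg S add b) b)"

definition completely_archimedean ::
  "'a set \<Rightarrow> ('a \<Rightarrow> 'a \<Rightarrow> 'a) \<Rightarrow> ('a \<Rightarrow> 'a \<Rightarrow> 'a) \<Rightarrow> bool" where
  "completely_archimedean S add mul \<longleftrightarrow> quasi_completely_regular S add mul \<and>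
     (\<forall>a\<in>S. \<forall>b\<in>S. addJstar S add a b)"

definition completely_simple ::
  "'a set \<Rightarrow> ('a \<Rightarrow> 'a \<Rightarrow> 'a) \<Rightarrow> ('a \<Rightarrow> 'a \<Rightarrow> 'a) \<Rightarrow> bool" where
  "completely_simple K add mul \<longleftrightarrow> semiring K add mul \<and>
     (\<forall>a\<in>K. completely_regular K add mul a) \<and>
     (\<forall>a\<in>K. \<forall>b\<in>K. addJ K add a b)"

definition rectangular_skew_ring ::
  "'a set \<Rightarrow> ('a \<Rightarrow> 'a \<Rightarrow> 'a) \<Rightarrow> ('a \<Rightarrow> 'a \<Rightarrow> 'a) \<Rightarrow> bool" where
  "rectangular_skew_ring K add mul \<longleftrightarrow> completely_simple K add mul \<and>
     add_subsemigroup (add_idempotents K add) K add"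

definition bi_ideal :: "'a set \<Rightarrow> 'a set \<Rightarrow> ('a \<Rightarrow> 'a \<Rightarrow> 'a) \<Rightarrow> ('a \<Rightarrow> 'a \<Rightarrow> 'a) \<Rightarrow> bool" where
  "bi_ideal K S add mul \<longleftrightarrow> K \<subseteq> S \<and>
     (\<forall>a\<in>K. \<forall>x\<in>S. add a x \<in> K \<and> add x a \<in> K \<and> mul a x \<in> K \<and> mul x a \<in> K)"

definition nil_extension ::
  "'a set \<Rightarrow> 'a set \<Rightarrow> ('a \<Rightarrow> 'a \<Rightarrow> 'a) \<Rightarrow> ('a \<Rightarrow> 'a \<Rightarrow> 'a) \<Rightarrow> bool" where
  "nil_extension S K add mul \<longleftrightarrow> K \<subseteq> S \<and> semiring K add mul \<and> bi_ideal K S add mul \<and>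
     (\<forall>a\<in>S. \<exists>n\<ge>1. nsum add n a \<in> K)"

end

theory Submission
  imports Defs
begin

(*
  If S is a nil-extension of a rectangular skew-ring K, then K is exactly the set of additively
  regular elements of S: for a + x + a = a the idempotent a + x has a multiple in K, hence lies in K,
  and then so does a = (a + x) + a. Complete Archimedeanity and closure of the idempotents are
  inherited from K.

  Conversely, let K be the set of additively regular elements. As all elements are J*-related, every
  regular c lies in S + t + S for every t. With the idempotents closed under addition this makes them
  primitive and a rectangular band. If t = \<alpha> + t + \<beta>, the identities of the groups containing powers
  of \<alpha> and \<beta> act as one-sided identities on t, and through the rectangular band the identity of the
  group containing a power of t becomes a two-sided identity of t; so t lies in that group. Every
  u + c + v with c regular has this shape, so K is a bi-ideal, and it is a completely simple semiring
  whose idempotents form a subsemigroup.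
*)

lemma nsum_induct:
  assumes "P 0" "P (Suc 0)" "\<And>n. P (Suc n) \<Longrightarrow> P (Suc (Suc n))"
  shows "P n"
proof -
  have "P n \<and> P (Suc n)" by (induction n) (use assms in auto)
  then show ?thesis by simp
qed

lemma add_principal_ideal_iff:
  "z \<in> add_principal_ideal T add a \<longleftrightarrow>
     z = a \<or> (\<exists>s\<in>T. z = add s a) \<or> (\<exists>t\<in>T. z = add a t) \<or> (\<exists>s\<in>T. \<exists>t\<in>T. z = add (add s a) t)"
  unfolding add_principal_ideal_def by blast

lemma add_principal_ideal_mono:
  "T \<subseteq> T' \<Longrightarrow> add_principal_ideal T add a \<subseteq> add_principal_ideal T' add a"
  unfolding add_principal_ideal_def by blast

lemma self_in_add_principal_ideal: "a \<in> add_principal_ideal T add a"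
  unfolding add_principal_ideal_def by blast

locale semigroup_on =
  fixes S :: "'a set" and add :: "'a \<Rightarrow> 'a \<Rightarrow> 'a" (infixl \<open>\<oplus>\<close> 65)
  assumes add_closed [simp]: "a \<in> S \<Longrightarrow> b \<in> S \<Longrightarrow> a \<oplus> b \<in> S"
    and add_assoc: "a \<in> S \<Longrightarrow> b \<in> S \<Longrightarrow> c \<in> S \<Longrightarrow> a \<oplus> b \<oplus> c = a \<oplus> (b \<oplus> c)"
begin

abbreviation ns :: "nat \<Rightarrow> 'a \<Rightarrow> 'a" where "ns n a \<equiv> nsum add n a"

lemma nsum_closed [simp]: "a \<in> S \<Longrightarrow> ns n a \<in> S"
  by (induction n rule: nsum_induct) auto

lemma nsum_commute: "a \<in> S \<Longrightarrow> a \<oplus> ns n a = ns n a \<oplus> a"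
  by (induction n rule: nsum_induct) (auto simp: add_assoc[symmetric])

lemma nsum_Suc_Suc_left: "a \<in> S \<Longrightarrow> ns (Suc (Suc n)) a = a \<oplus> ns (Suc n) a"
  using nsum_commute by simp

lemma nsum_idem: "e \<in> S \<Longrightarrow> e \<oplus> e = e \<Longrightarrow> ns n e = e"
  by (induction n rule: nsum_induct) auto

lemma nsum_absorb_left: "e \<in> S \<Longrightarrow> a \<in> S \<Longrightarrow> e \<oplus> a = a \<Longrightarrow> e \<oplus> ns n a = ns n a"
  by (induction n rule: nsum_induct) (auto simp: add_assoc[symmetric])

lemma nsum_absorb_right: "e \<in> S \<Longrightarrow> a \<in> S \<Longrightarrow> a \<oplus> e = a \<Longrightarrow> ns n a \<oplus> e = ns n a"
  by (induction n rule: nsum_induct) (auto simp: add_assoc)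

lemma nsum_sandwich:
  assumes "a \<in> S" "b \<in> S" "t \<in> S" "a \<oplus> t \<oplus> b = t"
  shows "ns n a \<oplus> t \<oplus> ns n b = t"
proof (induction n rule: nsum_induct)
  case (3 n)
  have "ns (Suc (Suc n)) a \<oplus> t \<oplus> ns (Suc (Suc n)) b = ns (Suc n) a \<oplus> (a \<oplus> t \<oplus> b) \<oplus> ns (Suc n) b"
    unfolding nsum_Suc_Suc_left[OF assms(2)] using assms(1-3) by (simp add: add_assoc)
  with 3 assms show ?case by simp
qed (use assms in auto)

lemma add_principal_ideal_add_closed:
  assumes "z \<in> add_principal_ideal S add a" "a \<in> S" "s \<in> S"
  shows "s \<oplus> z \<in> add_principal_ideal S add a" "z \<oplus> s \<in> add_principal_ideal S add a"
  using assms unfolding add_principal_ideal_iff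
  by (elim disjE bexE; metis add_assoc add_closed)+

lemma nsum_in_add_principal_ideal: "a \<in> S \<Longrightarrow> ns n a \<in> add_principal_ideal S add a"
  by (induction n rule: nsum_induct) (auto simp: add_principal_ideal_def)

lemma add_principal_ideal_subset:
  assumes "b \<in> add_principal_ideal S add a" "a \<in> S"
  shows "add_principal_ideal S add b \<subseteq> add_principal_ideal S add a"
proof
  fix z assume "z \<in> add_principal_ideal S add b"
  then show "z \<in> add_principal_ideal S add a"
    unfolding add_principal_ideal_iff[of z S add b]
    by (elim disjE bexE) (use assms add_principal_ideal_add_closed in blast)+
qed

lemma add_principal_ideal_sandwich:
  assumes "z \<in> add_principal_ideal S add a" "a \<in> S" "u \<in> S" "v \<in> S"
  shows "\<exists>p\<in>S. \<exists>q\<in>S. u \<oplus> z \<oplus> v = p \<oplus> a \<oplus> q"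
  using assms unfolding add_principal_ideal_iff
  by (elim disjE bexE; metis add_assoc add_closed)

definition Reg :: "'a set" where
  "Reg = {a \<in> S. \<exists>x\<in>S. a \<oplus> x \<oplus> a = a}"

lemma Reg_subset: "Reg \<subseteq> S"
  unfolding Reg_def by blast

lemma RegI: "a \<in> S \<Longrightarrow> x \<in> S \<Longrightarrow> a \<oplus> x \<oplus> a = a \<Longrightarrow> a \<in> Reg"
  unfolding Reg_def by blast

lemma RegE:
  assumes "a \<in> Reg"
  obtains x where "a \<in> S" "x \<in> S" "a \<oplus> x \<oplus> a = a"
  using assms unfolding Reg_def by blast

lemma Reg_iff_add_regular: "a \<in> Reg \<longleftrightarrow> a \<in> S \<and> add_regular S add a"
  unfolding Reg_def add_regular_def by (auto intro: sym)

lemma idempotent_in_Reg: "e \<in> S \<Longrightarrow> e \<oplus> e = e \<Longrightarrow> e \<in> Reg"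
  by (rule RegI[of e e]) auto

lemma mreg_Reg: "a \<in> Reg \<Longrightarrow> mreg S add a = 1"
  unfolding mreg_def by (rule Least_equality) (auto simp: Reg_iff_add_regular)

lemma nsum_mreg_in_Reg:
  assumes "a \<in> S" "n \<ge> 1" "ns n a \<in> Reg"
  shows "ns (mreg S add a) a \<in> Reg"
proof -
  have "\<exists>n. n \<ge> 1 \<and> add_regular S add (ns n a)"
    using assms Reg_iff_add_regular by blast
  then have "add_regular S add (ns (mreg S add a) a)"
    unfolding mreg_def by (rule LeastI2_ex) blast
  with assms(1) show ?thesis
    using Reg_iff_add_regular by simp
qed

lemma Reg_in_principal_ideal:
  assumes "c \<in> Reg" "t \<in> S" "c \<in> add_principal_ideal S add t"
  shows "\<exists>p\<in>S. \<exists>q\<in>S. c = p \<oplus> t \<oplus> q"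
proof -
  obtain x where x: "c \<in> S" "x \<in> S" "c \<oplus> x \<oplus> c = c"
    using assms(1) by (rule RegE)
  then have "c = (c \<oplus> x) \<oplus> c \<oplus> (x \<oplus> c)"
    by (simp add: add_assoc)
  with add_principal_ideal_sandwich[OF assms(3,2)] x show ?thesis
    by (metis add_closed)
qed

lemma idempotent_left_of_regular:
  "a \<in> S \<Longrightarrow> x \<in> S \<Longrightarrow> a \<oplus> x \<oplus> a = a \<Longrightarrow> a \<oplus> x \<oplus> (a \<oplus> x) = a \<oplus> x"
  by (metis add_assoc add_closed)

lemma idempotent_right_of_regular:
  "a \<in> S \<Longrightarrow> x \<in> S \<Longrightarrow> a \<oplus> x \<oplus> a = a \<Longrightarrow> x \<oplus> a \<oplus> (x \<oplus> a) = x \<oplus> a"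
  by (metis add_assoc add_closed)

lemma sandwich_group_identity_left:
  assumes "\<alpha> \<in> S" "\<beta> \<in> S" "t \<in> S" "\<alpha> \<oplus> t \<oplus> \<beta> = t"
    and "y \<in> S" "ns n \<alpha> \<oplus> y \<oplus> ns n \<alpha> = ns n \<alpha>"
  shows "ns n \<alpha> \<oplus> y \<oplus> t = t"
proof -
  have t: "ns n \<alpha> \<oplus> t \<oplus> ns n \<beta> = t"
    using nsum_sandwich assms(1-4) .
  have "ns n \<alpha> \<oplus> y \<oplus> t = (ns n \<alpha> \<oplus> y \<oplus> ns n \<alpha>) \<oplus> t \<oplus> ns n \<beta>"
    by (subst (1) t[symmetric]) (use assms(1-3,5) in \<open>simp add: add_assoc\<close>)
  with assms(6) t show ?thesis by simp
qed

lemma sandwich_group_identity_right: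
  assumes "\<alpha> \<in> S" "\<beta> \<in> S" "t \<in> S" "\<alpha> \<oplus> t \<oplus> \<beta> = t"
    and "y \<in> S" "ns n \<beta> \<oplus> y \<oplus> ns n \<beta> = ns n \<beta>"
  shows "t \<oplus> (y \<oplus> ns n \<beta>) = t"
proof -
  have t: "ns n \<alpha> \<oplus> t \<oplus> ns n \<beta> = t"
    using nsum_sandwich assms(1-4) .
  have "t \<oplus> (y \<oplus> ns n \<beta>) = ns n \<alpha> \<oplus> t \<oplus> (ns n \<beta> \<oplus> y \<oplus> ns n \<beta>)"
    by (subst (1) t[symmetric]) (use assms(1-3,5) in \<open>simp add: add_assoc\<close>)
  with assms(6) t show ?thesis by simp
qed

lemma addJ_superset:
  assumes K: "K \<subseteq> S" and J: "addJ K add u v"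
  shows "addJ S add u v"
proof -
  have in_K: "u \<in> K" "v \<in> K"
    using J unfolding addJ_def by auto
  have "add_principal_ideal S add a \<subseteq> add_principal_ideal S add b"
    if "a \<in> K" "b \<in> K" "add_principal_ideal K add a = add_principal_ideal K add b" for a b
  proof (rule add_principal_ideal_subset)
    have "a \<in> add_principal_ideal K add b"
      using that(3) self_in_add_principal_ideal by metis
    then show "a \<in> add_principal_ideal S add b"
      using add_principal_ideal_mono[OF K] by (rule subsetD[rotated])
    show "b \<in> S"
      using that(2) K by (rule subsetD[rotated])
  qed
  with J in_K K show ?thesis
    unfolding addJ_def by (metis subset_antisym subsetD)
qed

lemma group_inverse:
  assumes "P \<in> S" "y \<in> S" "P \<oplus> y \<oplus> P = P" "P \<oplus> y = y \<oplus> P"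
  shows "P \<oplus> (y \<oplus> P \<oplus> y) = P \<oplus> y" "y \<oplus> P \<oplus> y \<oplus> P = P \<oplus> y"
    and "P \<oplus> y \<oplus> (y \<oplus> P \<oplus> y) = y \<oplus> P \<oplus> y"
proof -
  have "P \<oplus> (y \<oplus> P \<oplus> y) = (P \<oplus> y \<oplus> P) \<oplus> y"
    using assms(1,2) by (simp add: add_assoc)
  then show "P \<oplus> (y \<oplus> P \<oplus> y) = P \<oplus> y"
    using assms(3) by simp
  have "y \<oplus> P \<oplus> y \<oplus> P = y \<oplus> (P \<oplus> y \<oplus> P)"
    using assms(1,2) by (simp add: add_assoc)
  then show "y \<oplus> P \<oplus> y \<oplus> P = P \<oplus> y"
    using assms(3,4) by simp
  have "P \<oplus> y \<oplus> (y \<oplus> P \<oplus> y) = y \<oplus> P \<oplus> (y \<oplus> P \<oplus> y)"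
    using assms(4) by simp
  also have "\<dots> = y \<oplus> (P \<oplus> y \<oplus> P) \<oplus> y"
    using assms(1,2) by (simp add: add_assoc)
  finally show "P \<oplus> y \<oplus> (y \<oplus> P \<oplus> y) = y \<oplus> P \<oplus> y"
    using assms(3) by simp
qed

(*
  y + P + y inverts P = N t in the group with identity P + y, and composing it with (N - 1) t inverts t;
  for N = 1 the identity stands in for the missing 0 t.
*)
lemma nsum_group_inverse:
  assumes t: "t \<in> S" and N: "N \<ge> 1" and y: "y \<in> S"
    and P: "ns N t \<oplus> y \<oplus> ns N t = ns N t" "ns N t \<oplus> y = y \<oplus> ns N t"
    and g: "ns N t \<oplus> y \<oplus> t = t" "t \<oplus> (ns N t \<oplus> y) = t"
  shows "\<exists>x\<in>S. t \<oplus> x \<oplus> t = t \<and> t \<oplus> x = x \<oplus> t \<and> t \<oplus> x = ns N t \<oplus> y \<and> ns N t \<oplus> y \<oplus> x = x"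
proof -
  define P where "P = ns N t"
  define y' where "y' = y \<oplus> P \<oplus> y"
  have PS: "P \<in> S" and y'S: "y' \<in> S"
    using t y by (simp_all add: P_def y'_def)
  have P': "P \<oplus> y \<oplus> P = P" "P \<oplus> y = y \<oplus> P" "P \<oplus> y \<oplus> t = t" "t \<oplus> (P \<oplus> y) = t"
    using P g by (simp_all add: P_def)
  note y' = group_inverse[OF PS y P'(1,2), folded y'_def]
  have ty': "t \<oplus> y' = y' \<oplus> t"
  proof -
    have "t \<oplus> y' = y' \<oplus> P \<oplus> t \<oplus> y'"
      using P'(3) y'(2) by simp
    also have "\<dots> = y' \<oplus> (t \<oplus> P) \<oplus> y'"
      using nsum_commute[OF t, of N] PS y'S t by (simp add: P_def add_assoc)
    also have "\<dots> = y' \<oplus> (t \<oplus> (P \<oplus> y'))"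
      using PS y'S t by (simp add: add_assoc)
    finally show ?thesis
      using y'(1) P'(4) by simp
  qed
  obtain Q where Q: "Q \<in> S" "t \<oplus> Q = P" "Q \<oplus> t = P"
  proof (cases "N = 1")
    case True
    then have "P = t" by (simp add: P_def)
    with P'(3,4) PS y show ?thesis
      by (intro that[of "P \<oplus> y"]) simp_all
  next
    case False
    with N have "N = Suc (Suc (N - 2))"
      by arith
    then obtain m where "N = Suc (Suc m)" ..
    with t show ?thesis
      by (intro that[of "ns (Suc m) t"]) (simp_all add: P_def nsum_commute)
  qed
  have "t \<oplus> (y' \<oplus> Q) = y' \<oplus> (t \<oplus> Q)"
    using t y'S Q(1) by (simp add: ty' add_assoc[symmetric])
  then have tx: "t \<oplus> (y' \<oplus> Q) = P \<oplus> y"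
    using Q(2) y'(2) by simp
  have xt: "y' \<oplus> Q \<oplus> t = P \<oplus> y"
    using Q y'(2) y'S t by (simp add: add_assoc)
  have gx: "P \<oplus> y \<oplus> (y' \<oplus> Q) = y' \<oplus> Q"
    using y'(3) PS y y'S Q(1) by (simp add: add_assoc[symmetric])
  show ?thesis
    using tx xt gx P'(3) y'S Q(1) unfolding P_def by (intro bexI[of _ "y' \<oplus> Q"]) auto
qed

end

locale completely_archimedean_semigroup = semigroup_on +
  assumes group_bound:
      "a \<in> S \<Longrightarrow> \<exists>n\<ge>1. \<exists>y\<in>S. ns n a \<oplus> y \<oplus> ns n a = ns n a \<and> ns n a \<oplus> y = y \<oplus> ns n a"
    and addJstar_total: "a \<in> S \<Longrightarrow> b \<in> S \<Longrightarrow> addJstar S add a b"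
begin

lemma Reg_in_every_ideal:
  assumes "c \<in> Reg" "t \<in> S"
  shows "\<exists>p\<in>S. \<exists>q\<in>S. c = p \<oplus> t \<oplus> q"
proof -
  let ?m = "ns (mreg S add t) t"
  have "add_principal_ideal S add c = add_principal_ideal S add ?m"
    using addJstar_total[of c t] mreg_Reg assms Reg_subset
    by (auto simp: addJstar_def addJ_def)
  then have "c \<in> add_principal_ideal S add ?m"
    using self_in_add_principal_ideal by metis
  also have "\<dots> \<subseteq> add_principal_ideal S add t"
    using assms(2) by (intro add_principal_ideal_subset nsum_in_add_principal_ideal)
  finally show ?thesis
    using Reg_in_principal_ideal assms by blast
qed

end

locale completely_archimedean_E_semigroup = completely_archimedean_semigroup +
  assumes idempotents_closed:
    "e \<in> S \<Longrightarrow> e \<oplus> e = e \<Longrightarrow> f \<in> S \<Longrightarrow> f \<oplus> f = f \<Longrightarrow> e \<oplus> f \<oplus> (e \<oplus> f) = e \<oplus> f"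
begin

lemma idempotents_primitive:
  assumes e: "e \<in> S" "e \<oplus> e = e" and f: "f \<in> S" "f \<oplus> f = f"
    and ef: "e \<oplus> f = f" "f \<oplus> e = f"
  shows "f = e"
proof -
  obtain a b where ab: "a \<in> S" "b \<in> S" "e = a \<oplus> f \<oplus> b"
    using Reg_in_every_ideal[OF idempotent_in_Reg[OF e] f(1)] by blast
  define \<alpha> where "\<alpha> = a \<oplus> f"
  have \<alpha>: "\<alpha> \<in> S" "\<alpha> \<oplus> f = \<alpha>"
    using ab f by (simp_all add: \<alpha>_def add_assoc)
  have "\<alpha> \<oplus> e \<oplus> b = a \<oplus> (f \<oplus> e) \<oplus> b"
    using ab(1,2) e f by (simp add: \<alpha>_def add_assoc)
  then have sw: "\<alpha> \<oplus> e \<oplus> b = e"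
    using ab(3) ef(2) by simp
  obtain n y where y: "y \<in> S" "ns n \<alpha> \<oplus> y \<oplus> ns n \<alpha> = ns n \<alpha>" "ns n \<alpha> \<oplus> y = y \<oplus> ns n \<alpha>"
    using group_bound[OF \<alpha>(1)] by blast
  define g where "g = ns n \<alpha> \<oplus> y"
  have ge: "g \<oplus> e = e"
    unfolding g_def using sandwich_group_identity_left[OF \<alpha>(1) ab(2) e(1) sw y(1,2)] .
  have "g \<oplus> f = y \<oplus> (ns n \<alpha> \<oplus> f)"
    using y \<alpha> f by (simp add: g_def add_assoc)
  then have gf: "g \<oplus> f = g"
    using nsum_absorb_right[OF f(1) \<alpha>] y(3) by (simp add: g_def)
  have "g \<in> S"
    using y \<alpha> by (simp add: g_def)
  have "f = g \<oplus> e \<oplus> f"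
    using ge ef(1) by simp
  also have "\<dots> = g \<oplus> (e \<oplus> f)"
    using \<open>g \<in> S\<close> e f by (simp add: add_assoc)
  finally have "f = g"
    using ef(1) gf by simp
  then show ?thesis
    using ge ef(2) by simp
qed

lemma idempotents_rectangular:
  assumes e: "e \<in> S" "e \<oplus> e = e" and f: "f \<in> S" "f \<oplus> f = f"
  shows "e \<oplus> f \<oplus> e = e"
proof -
  have "e \<oplus> f \<oplus> e \<oplus> (e \<oplus> f \<oplus> e) = e \<oplus> f \<oplus> e"
    using idempotents_closed[of "e \<oplus> f" e] idempotents_closed[OF e f] e f by simp
  moreover have "e \<oplus> (e \<oplus> f \<oplus> e) = e \<oplus> f \<oplus> e" "e \<oplus> f \<oplus> e \<oplus> e = e \<oplus> f \<oplus> e"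
    using e f by (simp_all add: add_assoc[symmetric]) (simp add: add_assoc)
  ultimately show ?thesis
    using idempotents_primitive[of e "e \<oplus> f \<oplus> e"] e f by simp
qed

lemma sandwich_power_identity_left:
  assumes "\<alpha> \<in> S" "\<beta> \<in> S" "t \<in> S" "\<alpha> \<oplus> t \<oplus> \<beta> = t"
    and y: "y \<in> S" "ns N t \<oplus> y \<oplus> ns N t = ns N t"
  shows "ns N t \<oplus> y \<oplus> t = t"
proof -
  define g where "g = ns N t \<oplus> y"
  obtain M z where z: "z \<in> S" "ns M \<alpha> \<oplus> z \<oplus> ns M \<alpha> = ns M \<alpha>"
    using group_bound[OF assms(1)] by blast
  define e where "e = ns M \<alpha> \<oplus> z"
  have e: "e \<in> S" "e \<oplus> e = e"
    using idempotent_left_of_regular[OF _ z(1,2)] assms(1) z(1) by (simp_all add: e_def)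
  have et: "e \<oplus> t = t"
    unfolding e_def using sandwich_group_identity_left[OF assms(1-4) z] .
  have g: "g \<in> S" "g \<oplus> g = g"
    using idempotent_left_of_regular[OF _ y(1,2)] assms(3) y(1) by (simp_all add: g_def)
  have "e \<oplus> g = g"
    using nsum_absorb_left[OF e(1) assms(3) et] e(1) assms(3) y(1) by (simp add: g_def add_assoc[symmetric])
  then have ge: "g \<oplus> e = e"
    using idempotents_rectangular[OF e g] by simp
  have "g \<oplus> t = (g \<oplus> e) \<oplus> t"
    using et e(1) g(1) assms(3) by (simp add: add_assoc)
  then show ?thesis
    using ge et by (simp add: g_def)
qed

lemma sandwich_power_identity_right:
  assumes "\<alpha> \<in> S" "\<beta> \<in> S" "t \<in> S" "\<alpha> \<oplus> t \<oplus> \<beta> = t"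
    and y: "y \<in> S" "ns N t \<oplus> y \<oplus> ns N t = ns N t" "ns N t \<oplus> y = y \<oplus> ns N t"
  shows "t \<oplus> (ns N t \<oplus> y) = t"
proof -
  define g where "g = ns N t \<oplus> y"
  obtain M z where z: "z \<in> S" "ns M \<beta> \<oplus> z \<oplus> ns M \<beta> = ns M \<beta>"
    using group_bound[OF assms(2)] by blast
  define f where "f = z \<oplus> ns M \<beta>"
  have f: "f \<in> S" "f \<oplus> f = f"
    using idempotent_right_of_regular[OF _ z(1,2)] assms(2) z(1) by (simp_all add: f_def)
  have tf: "t \<oplus> f = t"
    unfolding f_def using sandwich_group_identity_right[OF assms(1-4) z] .
  have g: "g \<in> S" "g \<oplus> g = g"
    using idempotent_left_of_regular[OF _ y(1,2)] assms(3) y(1) by (simp_all add: g_def)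
  have "g \<oplus> f = y \<oplus> (ns N t \<oplus> f)"
    using y(1,3) f(1) assms(3) by (simp add: g_def add_assoc)
  then have "g \<oplus> f = g"
    using nsum_absorb_right[OF f(1) assms(3) tf] y(3) by (simp add: g_def)
  then have fg: "f \<oplus> g = f"
    using idempotents_rectangular[OF f g] f(1) g(1) by (simp add: add_assoc)
  have "t \<oplus> g = t \<oplus> (f \<oplus> g)"
    using tf f(1) g(1) assms(3) by (simp add: add_assoc[symmetric])
  then show ?thesis
    using fg tf by (simp add: g_def)
qed

lemma Reg_if_sandwich:
  assumes "\<alpha> \<in> S" "\<beta> \<in> S" "t \<in> S" "\<alpha> \<oplus> t \<oplus> \<beta> = t"
  shows "t \<in> Reg"
proof -
  obtain N y where N: "N \<ge> 1" "y \<in> S" "ns N t \<oplus> y \<oplus> ns N t = ns N t" "ns N t \<oplus> y = y \<oplus> ns N t"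
    using group_bound[OF assms(3)] by blast
  obtain x where "x \<in> S" "t \<oplus> x \<oplus> t = t"
    using nsum_group_inverse[OF assms(3) N sandwich_power_identity_left[OF assms N(2,3)]
        sandwich_power_identity_right[OF assms N(2-4)]] by meson
  with assms(3) show ?thesis
    by (rule RegI)
qed

lemma Reg_sandwich_closed:
  assumes "c \<in> Reg" "u \<in> S" "v \<in> S"
  shows "u \<oplus> c \<oplus> v \<in> Reg"
proof -
  define t where "t = u \<oplus> c \<oplus> v"
  have t: "t \<in> S"
    using assms Reg_subset by (auto simp: t_def)
  obtain p q where pq: "p \<in> S" "q \<in> S" "c = p \<oplus> t \<oplus> q"
    using Reg_in_every_ideal[OF assms(1) t] by blast
  have "u \<oplus> p \<oplus> t \<oplus> (q \<oplus> v) = u \<oplus> (p \<oplus> t \<oplus> q) \<oplus> v"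
    using assms(2,3) pq(1,2) t by (simp add: add_assoc)
  also have "\<dots> = t"
    unfolding pq(3)[symmetric] by (rule t_def[symmetric])
  finally have "u \<oplus> p \<oplus> t \<oplus> (q \<oplus> v) = t" .
  with assms(2,3) pq(1,2) t show ?thesis
    unfolding t_def by (intro Reg_if_sandwich[of "u \<oplus> p" "q \<oplus> v"]) simp_all
qed

lemma Reg_add_closed:
  assumes "a \<in> Reg" "s \<in> S"
  shows "a \<oplus> s \<in> Reg" "s \<oplus> a \<in> Reg"
proof -
  obtain x where x: "a \<in> S" "x \<in> S" "a \<oplus> x \<oplus> a = a"
    using assms(1) by (rule RegE)
  then have "a \<oplus> (x \<oplus> a) = a"
    by (simp add: add_assoc)
  with x assms show "a \<oplus> s \<in> Reg" "s \<oplus> a \<in> Reg"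
    using Reg_sandwich_closed[OF assms(1), of "a \<oplus> x" s] Reg_sandwich_closed[OF assms(1), of s "x \<oplus> a"]
    by (simp_all add: add_assoc)
qed

lemma semigroup_on_Reg: "semigroup_on Reg add"
proof
  show "a \<oplus> b \<in> Reg" if "a \<in> Reg" "b \<in> Reg" for a b
    using that Reg_subset by (auto intro: Reg_add_closed)
  show "a \<oplus> b \<oplus> c = a \<oplus> (b \<oplus> c)" if "a \<in> Reg" "b \<in> Reg" "c \<in> Reg" for a b c
    using that Reg_subset by (intro add_assoc) auto
qed

lemma Reg_addJ:
  assumes "a \<in> Reg" "b \<in> Reg"
  shows "addJ Reg add a b"
proof -
  interpret Reg: semigroup_on Reg add
    by (rule semigroup_on_Reg)
  have "add_principal_ideal Reg add a \<subseteq> add_principal_ideal Reg add b"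
    if ab: "a \<in> Reg" "b \<in> Reg" for a b
  proof -
    obtain x where x: "a \<in> S" "x \<in> S" "a \<oplus> x \<oplus> a = a"
      using ab(1) by (rule RegE)
    obtain p q where pq: "p \<in> S" "q \<in> S" "a = p \<oplus> b \<oplus> q"
      using Reg_in_every_ideal ab Reg_subset by blast
    have "a \<oplus> x \<oplus> p \<oplus> b \<oplus> (q \<oplus> x \<oplus> a) = a \<oplus> x \<oplus> (p \<oplus> b \<oplus> q) \<oplus> x \<oplus> a"
      using x pq(1,2) ab(2) Reg_subset by (auto simp: add_assoc)
    then have "a = (a \<oplus> x \<oplus> p) \<oplus> b \<oplus> (q \<oplus> x \<oplus> a)"
      using x(3) pq(3) by simp
    moreover have "a \<oplus> x \<oplus> p \<in> Reg" "q \<oplus> x \<oplus> a \<in> Reg"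
      using Reg_add_closed ab(1) x pq by (simp_all add: add_assoc)
    ultimately have "a \<in> add_principal_ideal Reg add b"
      unfolding add_principal_ideal_iff by blast
    then show ?thesis
      using ab(2) by (rule Reg.add_principal_ideal_subset)
  qed
  with assms show ?thesis
    unfolding addJ_def by blast
qed

end

locale semiring_on =
  fixes S :: "'a set" and add :: "'a \<Rightarrow> 'a \<Rightarrow> 'a" (infixl \<open>\<oplus>\<close> 65)
    and mul :: "'a \<Rightarrow> 'a \<Rightarrow> 'a" (infixl \<open>\<otimes>\<close> 70)
  assumes semiring: "semiring S add mul"
begin

sublocale semigroup_on S add
  using semiring unfolding semiring_def by unfold_locales blast+

lemma mul_closed [simp]: "a \<in> S \<Longrightarrow> b \<in> S \<Longrightarrow> a \<otimes> b \<in> S"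
  using semiring unfolding semiring_def by blast

lemma mul_add_distrib_left: "a \<in> S \<Longrightarrow> b \<in> S \<Longrightarrow> c \<in> S \<Longrightarrow> a \<otimes> (b \<oplus> c) = a \<otimes> b \<oplus> a \<otimes> c"
  using semiring unfolding semiring_def by blast

lemma mul_add_distrib_right: "a \<in> S \<Longrightarrow> b \<in> S \<Longrightarrow> c \<in> S \<Longrightarrow> (b \<oplus> c) \<otimes> a = b \<otimes> a \<oplus> c \<otimes> a"
  using semiring unfolding semiring_def by blast

lemma semiring_subset:
  assumes "T \<subseteq> S" "\<And>a b. a \<in> T \<Longrightarrow> b \<in> T \<Longrightarrow> a \<oplus> b \<in> T \<and> a \<otimes> b \<in> T"
  shows "semiring T add mul"
  using semiring assms unfolding semiring_def by (simp add: subset_iff)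

lemma nsum_mul_right: "a \<in> S \<Longrightarrow> b \<in> S \<Longrightarrow> ns n a \<otimes> b = ns n (a \<otimes> b)"
  by (induction n rule: nsum_induct) (auto simp: mul_add_distrib_right)

lemma Reg_mul_closed:
  assumes "a \<in> Reg" "s \<in> S"
  shows "a \<otimes> s \<in> Reg" "s \<otimes> a \<in> Reg"
proof -
  obtain x where x: "a \<in> S" "x \<in> S" "a \<oplus> x \<oplus> a = a"
    using assms(1) by (rule RegE)
  have "a \<otimes> s \<oplus> x \<otimes> s \<oplus> a \<otimes> s = (a \<oplus> x \<oplus> a) \<otimes> s"
    using x(1,2) assms(2) by (simp add: mul_add_distrib_right)
  with x assms(2) show "a \<otimes> s \<in> Reg"
    by (intro RegI[of _ "x \<otimes> s"]) simp_all
  have "s \<otimes> a \<oplus> s \<otimes> x \<oplus> s \<otimes> a = s \<otimes> (a \<oplus> x \<oplus> a)"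
    using x(1,2) assms(2) by (simp add: mul_add_distrib_left)
  with x assms(2) show "s \<otimes> a \<in> Reg"
    by (intro RegI[of _ "s \<otimes> x"]) simp_all
qed

lemma mul_idempotent_absorb:
  assumes "t \<in> S" "g \<in> S" "g \<oplus> g = g" "ns N t \<otimes> g = g"
  shows "t \<otimes> g = g"
proof -
  have "t \<otimes> g \<oplus> t \<otimes> g = t \<otimes> g"
    using mul_add_distrib_left[of t g g] assms(1-3) by simp
  then have "ns N (t \<otimes> g) = t \<otimes> g"
    using nsum_idem assms(1,2) by simp
  with assms show ?thesis
    using nsum_mul_right[OF assms(1,2)] by simp
qed

lemma Reg_subset_nil_extension:
  assumes "nil_extension S K add mul"
  shows "Reg \<subseteq> K"
proof
  fix a assume "a \<in> Reg"
  then obtain x where x: "a \<in> S" "x \<in> S" "a \<oplus> x \<oplus> a = a"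
    by (rule RegE)
  define e where "e = a \<oplus> x"
  have e: "e \<in> S" "e \<oplus> e = e"
    using idempotent_left_of_regular[OF x] x by (simp_all add: e_def)
  obtain n where "ns n e \<in> K"
    using assms e(1) unfolding nil_extension_def by blast
  then have "e \<in> K"
    using nsum_idem[OF e] by simp
  then have "e \<oplus> a \<in> K"
    using assms x(1) unfolding nil_extension_def bi_ideal_def by blast
  then show "a \<in> K"
    using x(3) by (simp add: e_def)
qed

lemma completely_archimedean_nil_extension:
  assumes ext: "nil_extension S K add mul" and rsr: "rectangular_skew_ring K add mul"
  shows "completely_archimedean S add mul \<and> add_subsemigroup (add_idempotents S add) S add"
proof -
  have KS: "K \<subseteq> S" and nil: "\<And>a. a \<in> S \<Longrightarrow> \<exists>n\<ge>1. ns n a \<in> K"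
    using ext unfolding nil_extension_def by auto
  have JK: "\<forall>a\<in>K. \<forall>b\<in>K. addJ K add a b" and EK: "add_subsemigroup (add_idempotents K add) K add"
    and crK: "\<And>a. a \<in> K \<Longrightarrow> completely_regular K add mul a"
    using rsr unfolding rectangular_skew_ring_def completely_simple_def by auto
  have crS: "completely_regular S add mul a" if "a \<in> K" for a
    using crK[OF that] KS unfolding completely_regular_def by blast
  have "K \<subseteq> Reg"
    using crS KS unfolding completely_regular_def by (auto intro: RegI[OF _ _ sym])
  with Reg_subset_nil_extension[OF ext] have K: "K = Reg" by blast
  have "quasi_completely_regular S add mul"
    unfolding quasi_completely_regular_def using semiring nil crS by blast
  moreover have "addJstar S add a b" if "a \<in> S" "b \<in> S" for a b
  proof -
    have "ns (mreg S add c) c \<in> K" if "c \<in> S" for c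
      using nil[OF that] nsum_mreg_in_Reg[OF that] K by blast
    with that JK show ?thesis
      unfolding addJstar_def by (blast intro: addJ_superset[OF KS])
  qed
  moreover have "add_subsemigroup (add_idempotents S add) S add"
    using EK K idempotent_in_Reg Reg_subset
    unfolding add_subsemigroup_def add_idempotents_def by blast
  ultimately show ?thesis
    unfolding completely_archimedean_def by blast
qed

end

locale completely_archimedean_E_semiring = semiring_on +
  assumes completely_archimedean: "completely_archimedean S add mul"
    and idempotents_subsemigroup: "add_subsemigroup (add_idempotents S add) S add"
begin

lemma nsum_completely_regular:
  assumes "a \<in> S"
  obtains n y where "n \<ge> 1" "y \<in> S" "ns n a \<oplus> y \<oplus> ns n a = ns n a" "ns n a \<oplus> y = y \<oplus> ns n a"
    "ns n a \<otimes> (ns n a \<oplus> y) = ns n a \<oplus> y"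
  using completely_archimedean assms
  unfolding completely_archimedean_def quasi_completely_regular_def completely_regular_def
  by (metis (no_types, lifting))

sublocale completely_archimedean_E_semigroup S add
proof
  show "\<exists>n\<ge>1. \<exists>y\<in>S. ns n a \<oplus> y \<oplus> ns n a = ns n a \<and> ns n a \<oplus> y = y \<oplus> ns n a" if "a \<in> S" for a
    using nsum_completely_regular[OF that] by blast
  show "addJstar S add a b" if "a \<in> S" "b \<in> S" for a b
    using completely_archimedean that unfolding completely_archimedean_def by blast
  show "e \<oplus> f \<oplus> (e \<oplus> f) = e \<oplus> f" if "e \<in> S" "e \<oplus> e = e" "f \<in> S" "f \<oplus> f = f" for e f
    using idempotents_subsemigroup that unfolding add_subsemigroup_def add_idempotents_def by blast
qed

lemma Reg_completely_regular:
  assumes a: "a \<in> Reg"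
  shows "completely_regular Reg add mul a"
proof -
  obtain x where x: "a \<in> S" "x \<in> S" "a \<oplus> x \<oplus> a = a"
    using a by (rule RegE)
  then have sw: "a \<oplus> x \<oplus> a \<oplus> (x \<oplus> a) = a"
    by (simp add: add_assoc)
  have ax: "a \<oplus> x \<in> S" "x \<oplus> a \<in> S"
    using x by simp_all
  obtain N y where N: "N \<ge> 1" "y \<in> S" "ns N a \<oplus> y \<oplus> ns N a = ns N a" "ns N a \<oplus> y = y \<oplus> ns N a"
    and mul: "ns N a \<otimes> (ns N a \<oplus> y) = ns N a \<oplus> y"
    using nsum_completely_regular[OF x(1)] by blast
  define g where "g = ns N a \<oplus> y"
  have g: "g \<in> S" "g \<oplus> g = g"
    using idempotent_left_of_regular[OF _ N(2,3)] x(1) N(2) by (simp_all add: g_def)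
  obtain z where z: "z \<in> S" "a \<oplus> z \<oplus> a = a" "a \<oplus> z = z \<oplus> a" "a \<oplus> z = g" "g \<oplus> z = z"
    using nsum_group_inverse[OF x(1) N sandwich_power_identity_left[OF ax x(1) sw N(2,3)]
        sandwich_power_identity_right[OF ax x(1) sw N(2-4)]]
    unfolding g_def by blast
  have "z \<in> Reg"
    using Reg_add_closed(1)[OF idempotent_in_Reg[OF g] z(1)] z(5) by simp
  moreover have "a \<otimes> (a \<oplus> z) = a \<oplus> z"
    using mul_idempotent_absorb[OF x(1) g] mul z(4) by (simp add: g_def)
  ultimately show ?thesis
    unfolding completely_regular_def using z(2,3) by (metis (no_types, lifting))
qed

lemma nil_extension_Reg: "nil_extension S Reg add mul"
  unfolding nil_extension_def bi_ideal_def
proof (intro conjI ballI)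
  show "semiring Reg add mul"
    using Reg_subset Reg_add_closed Reg_mul_closed by (intro semiring_subset) (auto simp: subset_iff)
  show "\<exists>n\<ge>1. ns n a \<in> Reg" if "a \<in> S" for a
    using nsum_completely_regular[OF that] that by (metis RegI nsum_closed)
qed (use Reg_subset Reg_add_closed Reg_mul_closed in auto)

lemma rectangular_skew_ring_Reg: "rectangular_skew_ring Reg add mul"
  unfolding rectangular_skew_ring_def completely_simple_def
proof (intro conjI ballI)
  show "semiring Reg add mul"
    using nil_extension_Reg unfolding nil_extension_def by blast
  show "add_subsemigroup (add_idempotents Reg add) Reg add"
    using Reg_subset Reg_add_closed idempotents_closed
    unfolding add_subsemigroup_def add_idempotents_def by (auto simp: subset_iff)
qed (use Reg_completely_regular Reg_addJ in auto)

end

theorem theorem3p5: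
  fixes S :: "'a set" and add mul :: "'a \<Rightarrow> 'a \<Rightarrow> 'a"
  assumes "semiring S add mul"
  shows "(\<exists>K. nil_extension S K add mul \<and> rectangular_skew_ring K add mul) \<longleftrightarrow>
         (completely_archimedean S add mul \<and>
          add_subsemigroup (add_idempotents S add) S add)"
proof
  interpret semiring_on S add mul
    by (rule semiring_on.intro) (rule assms)
  assume "\<exists>K. nil_extension S K add mul \<and> rectangular_skew_ring K add mul"
  then show "completely_archimedean S add mul \<and> add_subsemigroup (add_idempotents S add) S add"
    using completely_archimedean_nil_extension by blast
next
  assume "completely_archimedean S add mul \<and> add_subsemigroup (add_idempotents S add) S add"
  then interpret completely_archimedean_E_semiring S add mul
    using assms by unfold_locales auto
  show "\<exists>K. nil_extension S K add mul \<and> rectangular_skew_ring K add mul"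
    using nil_extension_Reg rectangular_skew_ring_Reg by blast
qed

end
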